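(* Let $r$ be a prime power, $m\ge1$ an integer, and let $G$ be one of the classical groups $\mathrm{L}_m(r)$, $\mathrm{U}_m(r)$, $\mathrm{PSp}_{2m}(r)$, $\Omega_{2m+1}(r)$, or $\mathrm{P\Omega}^{\pm}_{2m}(r)$ (for parameters where these are the finite simple classical groups). If $p$ is a prime not dividing $r$, then $$v_p(|G|)\le 3\,\frac{\log (r+1)^m}{\log p}.$$
   Context: Notation follows Kleidman–Liebeck: $\mathrm{L}_m(r)=\mathrm{PSL}_m(r)$, $\mathrm{U}_m(r)=\mathrm{PSU}_m(r)$ (defined over $\mathbb{F}_{r^2}$), $\mathrm{PSp}_{2m}(r)$ the projective symplectic group, $\Omega_{2m+1}(r)$ ($r$ odd) and $\mathrm{P\Omega}^{\pm}_{2m}(r)$ the simple orthogonal groups; $r$ is the order of the defining field in this notation. For a prime $p$ and nonzero integer $N$, $v_p(N)$ is the largest $k$ with $p^k\mid N$. *)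

theory Defs
  imports "HOL-Computational_Algebra.Primes" Complex_Main
begin

text \<open>The families of finite simple classical groups (Kleidman--Liebeck notation):
  L_m(r), U_m(r), PSp_{2m}(r), Omega_{2m+1}(r) (r odd), POmega^+_{2m}(r), POmega^-_{2m}(r).\<close>
datatype classical_family = Lin | Unit | Symp | OrthOdd | OrthPlus | OrthMinus

text \<open>Order of the group of the given family with parameters m and r (standard order formulas,
  as tabulated in Kleidman--Liebeck, Table 5.1.A).\<close>
fun classical_order :: "classical_family \<Rightarrow> nat \<Rightarrow> nat \<Rightarrow> nat" where
  "classical_order Lin m r =
     nat ((int r ^ (m * (m - 1) div 2) * (\<Prod>i\<in>{2..m}. (int r ^ i - 1)))
          div int (gcd m (r - 1)))"
| "classical_order Unit m r =
     nat ((int r ^ (m * (m - 1) div 2) * (\<Prod>i\<in>{2..m}. (int r ^ i - (-1) ^ i)))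
          div int (gcd m (r + 1)))"
| "classical_order Symp m r =
     nat ((int r ^ (m * m) * (\<Prod>i\<in>{1..m}. (int r ^ (2 * i) - 1)))
          div int (gcd 2 (r - 1)))"
| "classical_order OrthOdd m r =
     nat ((int r ^ (m * m) * (\<Prod>i\<in>{1..m}. (int r ^ (2 * i) - 1))) div 2)"
| "classical_order OrthPlus m r =
     nat ((int r ^ (m * (m - 1)) * (int r ^ m - 1) * (\<Prod>i\<in>{1..m-1}. (int r ^ (2 * i) - 1)))
          div gcd 4 (int r ^ m - 1))"
| "classical_order OrthMinus m r =
     nat ((int r ^ (m * (m - 1)) * (int r ^ m + 1) * (\<Prod>i\<in>{1..m-1}. (int r ^ (2 * i) - 1)))
          div gcd 4 (int r ^ m + 1))"

fun simple_params :: "classical_family \<Rightarrow> nat \<Rightarrow> nat \<Rightarrow> bool" where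
  "simple_params Lin m r = (m \<ge> 2 \<and> \<not> (m = 2 \<and> r \<le> 3))"
| "simple_params Unit m r = (m \<ge> 3 \<and> \<not> (m = 3 \<and> r = 2))"
| "simple_params Symp m r = (m \<ge> 2 \<and> \<not> (m = 2 \<and> r = 2))"
| "simple_params OrthOdd m r = (odd r \<and> m \<ge> 2)"
| "simple_params OrthPlus m r = (m \<ge> 3)"
| "simple_params OrthMinus m r = (m \<ge> 2)"

definition prime_power :: "nat \<Rightarrow> bool" where
  "prime_power r \<longleftrightarrow> (\<exists>q k. prime q \<and> k \<ge> 1 \<and> r = q ^ k)"

end

(*
  Each order in the list divides r^a * (r^2 - 1)(r^4 - 1)...(r^(2m) - 1), so for p not dividing r
  the exponent of p is at most the sum of v_p(s^i - 1) over i = 1..m, where s = r^2.  Let e be the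
  multiplicative order of s mod p.  Only multiples i = e k contribute, and by lifting the exponent
  v_p(s^(e k) - 1) <= v_p(s^e - 1) + v_p(k); for p = 2 this needs s = 1 mod 4, which holds because
  s is an odd square.  Since p^(v_p(s^e - 1)) < s^e and, by Legendre, p^(v_p(n!)) <= 2^n, the
  p-part of the order is at most (2 r^2)^m <= (r + 1)^(3 m); taking logarithms gives the bound.
*)
theory Submission
  imports Defs "HOL-Number_Theory.Number_Theory"
begin

section \<open>Lifting the exponent\<close>

lemma power_diff_1_eq_nat:
  fixes x :: nat
  assumes "x \<ge> 1"
  shows "x ^ n - 1 = (x - 1) * (\<Sum>i<n. x ^ i)"
proof -
  have "int (x ^ n - 1) = (int x - 1) * (\<Sum>i<n. int x ^ i)"
    using assms by (simp add: of_nat_diff power_diff_1_eq)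
  also have "\<dots> = int ((x - 1) * (\<Sum>i<n. x ^ i))"
    using assms by (simp add: of_nat_diff)
  finally show ?thesis by (simp only: of_nat_eq_iff)
qed

lemma multiplicity_power_diff_1:
  fixes p x n :: nat
  assumes "prime p" "x > 1" "n > 0"
  shows "multiplicity p (x ^ n - 1) = multiplicity p (x - 1) + multiplicity p (\<Sum>i<n. x ^ i)"
proof -
  have "(\<Sum>i<n. x ^ i) \<noteq> 0"
    using assms(2,3) by (auto simp: sum_eq_0_iff)
  moreover have "x ^ n - 1 = (x - 1) * (\<Sum>i<n. x ^ i)"
    using assms(2) by (intro power_diff_1_eq_nat) simp
  ultimately show ?thesis
    using assms by (simp add: prime_elem_multiplicity_mult_distrib prime_imp_prime_elem)
qed

lemma geometric_sum_cong_length: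
  fixes x m n :: nat
  assumes "[x = 1] (mod m)"
  shows "[(\<Sum>i<n. x ^ i) = n] (mod m)"
proof -
  have "[(\<Sum>i<n. x ^ i) = (\<Sum>i<n. 1 ^ i)] (mod m)"
    using assms by (intro cong_sum cong_pow)
  then show ?thesis by simp
qed

lemma power_one_plus_mult_cong:
  fixes p a i :: nat
  shows "[(1 + p * a) ^ i = 1 + i * p * a] (mod p^2)"
proof (induction i)
  case (Suc i)
  have "[(1 + p * a) ^ Suc i = (1 + i * p * a) * (1 + p * a)] (mod p^2)"
    unfolding power_Suc2 by (rule cong_mult[OF Suc cong_refl])
  also have "(1 + i * p * a) * (1 + p * a) = (1 + Suc i * p * a) + (i * a * a) * p^2"
    by (simp add: algebra_simps power2_eq_square)
  also have "[\<dots> = 1 + Suc i * p * a] (mod p^2)"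
    by (simp add: cong_def)
  finally show ?case .
qed simp

lemma geometric_sum_cong_prime_square:
  fixes p a :: nat
  assumes "even (a * (p - 1))"
  shows "[(\<Sum>i<p. (1 + p * a) ^ i) = p] (mod p^2)"
proof -
  have gauss: "2 * (\<Sum>i<p. i) = p * (p - 1)"
    by (induction p) (auto simp: algebra_simps)
  have "[(\<Sum>i<p. (1 + p * a) ^ i) = (\<Sum>i<p. 1 + i * p * a)] (mod p^2)"
    by (intro cong_sum power_one_plus_mult_cong)
  also have "(\<Sum>i<p. 1 + i * p * a) = p + p^2 * (a * (p - 1) div 2)"
  proof -
    have "(\<Sum>i<p. 1 + i * p * a) = (\<Sum>i<p. 1) + (\<Sum>i<p. i * p * a)"
      by (rule sum.distrib)
    also have "\<dots> = p + p * a * (\<Sum>i<p. i)"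
      by (simp add: sum_distrib_left sum_distrib_right mult_ac)
    finally have "2 * (\<Sum>i<p. 1 + i * p * a) = 2 * p + p * a * (2 * (\<Sum>i<p. i))"
      by simp
    also have "\<dots> = 2 * (p + p^2 * (a * (p - 1) div 2))"
      using assms by (simp add: gauss power2_eq_square algebra_simps)
    finally show ?thesis by simp
  qed
  also have "[p + p^2 * (a * (p - 1) div 2) = p] (mod p^2)"
    by (simp add: cong_def)
  finally show ?thesis .
qed

lemma multiplicity_power_diff_1_coprime_exp:
  fixes p x n :: nat
  assumes "prime p" "x > 1" "[x = 1] (mod p)" "\<not> p dvd n"
  shows "multiplicity p (x ^ n - 1) = multiplicity p (x - 1)"
proof -
  have "n > 0" using assms(4) by (metis dvd_0_right gr0I)
  have "\<not> p dvd (\<Sum>i<n. x ^ i)"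
    using geometric_sum_cong_length[OF assms(3)] assms(4) by (metis cong_dvd_iff)
  then show ?thesis
    using multiplicity_power_diff_1[OF assms(1,2) \<open>n > 0\<close>] by (simp add: not_dvd_imp_multiplicity_0)
qed

lemma multiplicity_power_prime_diff_1_le:
  fixes p x :: nat
  assumes "prime p" "x > 1" "[x = 1] (mod p)" "odd p \<or> [x = 1] (mod 4)"
  shows "multiplicity p (x ^ p - 1) \<le> multiplicity p (x - 1) + 1"
proof -
  obtain a where a: "x = 1 + p * a"
    using assms(2,3) by (metis cong_altdef_nat dvd_def le_add_diff_inverse less_imp_le_nat)
  have "even (a * (p - 1))"
  proof (cases "odd p")
    case False
    then have "p = 2"
      using primes_dvd_imp_eq[OF two_is_prime_nat assms(1)] by simp
    with assms(4) a show ?thesis by (simp add: cong_altdef_nat)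
  qed simp
  then have "[(\<Sum>i<p. x ^ i) = p] (mod p^2)"
    unfolding a by (rule geometric_sum_cong_prime_square)
  moreover have "\<not> p^2 dvd p"
    using prime_gt_1_nat[OF assms(1)] by (simp add: power2_eq_square)
  ultimately have "\<not> p^2 dvd (\<Sum>i<p. x ^ i)"
    by (metis cong_dvd_iff)
  then have "\<not> 2 \<le> multiplicity p (\<Sum>i<p. x ^ i)"
    using multiplicity_dvd' by blast
  then show ?thesis
    using multiplicity_power_diff_1[OF assms(1,2)] prime_gt_0_nat[OF assms(1)] by simp
qed

lemma multiplicity_power_diff_1_le:
  fixes p x n :: nat
  assumes "prime p" "x > 1" "[x = 1] (mod p)" "odd p \<or> [x = 1] (mod 4)" "n > 0"
  shows "multiplicity p (x ^ n - 1) \<le> multiplicity p (x - 1) + multiplicity p n"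
  using assms(2-5)
proof (induction n arbitrary: x rule: less_induct)
  case (less n)
  show ?case
  proof (cases "p dvd n")
    case False
    then show ?thesis
      using multiplicity_power_diff_1_coprime_exp[OF assms(1) less.prems(1,2)] by simp
  next
    case True
    then obtain k where n: "n = p * k" ..
    have "k > 0" "k < n"
      using less.prems(4) prime_gt_1_nat[OF assms(1)] n by auto
    have xp: "x ^ p > 1" "[x ^ p = 1] (mod p)" "odd p \<or> [x ^ p = 1] (mod 4)"
      using less.prems(1-3) one_less_power[of x p] prime_gt_0_nat[OF assms(1)] cong_pow[of x 1 _ p]
      by auto
    have "multiplicity p (x ^ n - 1) = multiplicity p ((x ^ p) ^ k - 1)"
      by (simp add: n power_mult)
    also have "\<dots> \<le> multiplicity p (x ^ p - 1) + multiplicity p k"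
      using less.IH[OF \<open>k < n\<close> xp \<open>k > 0\<close>] .
    also have "\<dots> \<le> multiplicity p (x - 1) + 1 + multiplicity p k"
      using multiplicity_power_prime_diff_1_le[OF assms(1) less.prems(1-3)] by simp
    also have "\<dots> = multiplicity p (x - 1) + multiplicity p n"
      using \<open>k > 0\<close> prime_gt_1_nat[OF assms(1)] multiplicity_times_same[of k p] by (simp add: n)
    finally show ?thesis .
  qed
qed

lemma multiplicity_power_diff_1_le_ord:
  fixes p s i :: nat
  assumes "prime p" "s > 1" "coprime p s" "odd p \<or> [s = 1] (mod 4)" "i > 0"
  shows "multiplicity p (s ^ i - 1) \<le>
    (if ord p s dvd i then multiplicity p (s ^ ord p s - 1) + multiplicity p (i div ord p s) else 0)"
proof (cases "ord p s dvd i")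
  case True
  then obtain k where i: "i = ord p s * k" ..
  have "ord p s > 0"
    using assms(3) ord_eq_0[of p s] by simp
  then have x: "s ^ ord p s > 1" "[s ^ ord p s = 1] (mod p)" "odd p \<or> [s ^ ord p s = 1] (mod 4)"
    using assms(2,4) one_less_power[of s "ord p s"] ord[of s p] cong_pow[of s 1 4] by auto
  have "k > 0"
    using assms(5) i by (cases k) auto
  have "multiplicity p (s ^ i - 1) = multiplicity p ((s ^ ord p s) ^ k - 1)"
    by (simp add: i power_mult)
  also have "\<dots> \<le> multiplicity p (s ^ ord p s - 1) + multiplicity p k"
    using multiplicity_power_diff_1_le[OF assms(1) x \<open>k > 0\<close>] .
  finally show ?thesis
    using True \<open>ord p s > 0\<close> by (simp add: i)
next
  case False
  then have "\<not> [s ^ i = 1] (mod p)"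
    using ord_divides by blast
  then have "\<not> p dvd s ^ i - 1"
    using assms(2) by (simp add: cong_altdef_nat)
  then show ?thesis
    using False by (simp add: not_dvd_imp_multiplicity_0)
qed

section \<open>Legendre's bound\<close>

lemma sum_over_multiples:
  fixes e m :: nat and f :: "nat \<Rightarrow> 'a::comm_monoid_add"
  assumes "e > 0"
  shows "(\<Sum>i=1..m. if e dvd i then f (i div e) else 0) = (\<Sum>k=1..m div e. f k)"
proof (induction m)
  case (Suc m)
  show ?case
  proof (cases "e dvd Suc m")
    case True
    then have "Suc m div e = Suc (m div e)"
      using assms by (simp add: div_Suc)
    with Suc True show ?thesis by simp
  next
    case False
    then have "Suc m div e = m div e"
      by (simp add: div_Suc dvd_eq_mod_eq_0)
    with Suc False show ?thesis by simp
  qed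
qed simp

lemma sum_multiplicity_div:
  fixes p n :: nat
  assumes "prime p"
  shows "(\<Sum>j=1..n. multiplicity p j) = n div p + (\<Sum>k=1..n div p. multiplicity p k)"
proof -
  have "multiplicity p j = (if p dvd j then Suc (multiplicity p (j div p)) else 0)"
    if "j \<ge> 1" for j
  proof (cases "p dvd j")
    case True
    then have "j = p * (j div p)" "j div p \<noteq> 0"
      using that by auto
    then show ?thesis
      using True prime_gt_1_nat[OF assms] multiplicity_times_same[of "j div p" p] by simp
  qed (simp add: not_dvd_imp_multiplicity_0)
  then have "(\<Sum>j=1..n. multiplicity p j)
      = (\<Sum>j=1..n. if p dvd j then Suc (multiplicity p (j div p)) else 0)"
    by (intro sum.cong) auto
  also have "\<dots> = (\<Sum>k=1..n div p. Suc (multiplicity p k))"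
    using prime_gt_0_nat[OF assms] by (rule sum_over_multiples)
  also have "\<dots> = n div p + (\<Sum>k=1..n div p. multiplicity p k)"
    by (simp add: sum_Suc)
  finally show ?thesis .
qed

text \<open>The sum is the exponent of \<open>p\<close> in \<open>n!\<close>.\<close>
lemma sum_multiplicity_le:
  fixes p n :: nat
  assumes "prime p"
  shows "(p - 1) * (\<Sum>j=1..n. multiplicity p j) \<le> n"
proof (induction n rule: less_induct)
  case (less n)
  have "p > 1" using prime_gt_1_nat[OF assms] .
  show ?case
  proof (cases "n = 0")
    case False
    then have "n div p < n" using \<open>p > 1\<close> by simp
    have "(p - 1) * (\<Sum>j=1..n. multiplicity p j)
        = (p - 1) * (n div p) + (p - 1) * (\<Sum>k=1..n div p. multiplicity p k)"
      unfolding sum_multiplicity_div[OF assms, of n] by (rule add_mult_distrib2)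
    also have "\<dots> \<le> (p - 1) * (n div p) + n div p"
      using less.IH[OF \<open>n div p < n\<close>] by simp
    also have "\<dots> = p * (n div p)"
      using \<open>p > 1\<close> by (cases p) auto
    also have "\<dots> \<le> n" by simp
    finally show ?thesis .
  qed simp
qed

lemma prime_power_sum_multiplicity_le:
  fixes p n :: nat
  assumes "prime p"
  shows "p ^ (\<Sum>j=1..n. multiplicity p j) \<le> 2 ^ n"
proof -
  have "p \<le> 2 ^ (p - 1)"
    using less_exp[of "p - 1"] prime_gt_0_nat[OF assms] by linarith
  then have "p ^ (\<Sum>j=1..n. multiplicity p j) \<le> (2 ^ (p - 1)) ^ (\<Sum>j=1..n. multiplicity p j)"
    by (rule power_mono) simp
  also have "\<dots> = 2 ^ ((p - 1) * (\<Sum>j=1..n. multiplicity p j))"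
    by (simp add: power_mult)
  also have "\<dots> \<le> 2 ^ n"
    using sum_multiplicity_le[OF assms] by (intro power_increasing) auto
  finally show ?thesis .
qed

section \<open>The \<open>p\<close>-part of \<open>(s - 1)(s\<^sup>2 - 1)\<dots>(s\<^sup>m - 1)\<close>\<close>

lemma prime_power_sum_multiplicity_power_diff_1_le:
  fixes p s m :: nat
  assumes "prime p" "s > 1" "coprime p s" "odd p \<or> [s = 1] (mod 4)"
  shows "p ^ (\<Sum>i=1..m. multiplicity p (s ^ i - 1)) \<le> (2 * s) ^ m"
proof -
  define e where "e = ord p s"
  define t where "t = multiplicity p (s ^ e - 1)"
  define n where "n = m div e"
  have "e > 0"
    using assms(3) ord_eq_0[of p s] by (simp add: e_def)
  have "p ^ t \<le> s ^ e"
  proof -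
    have "s ^ e > 1"
      using assms(2) \<open>e > 0\<close> one_less_power[of s e] by simp
    then have "p ^ t \<le> s ^ e - 1"
      unfolding t_def by (intro dvd_imp_le multiplicity_dvd) simp
    then show ?thesis by simp
  qed
  have "(\<Sum>i=1..m. multiplicity p (s ^ i - 1))
      \<le> (\<Sum>i=1..m. if e dvd i then t + multiplicity p (i div e) else 0)"
    using multiplicity_power_diff_1_le_ord[OF assms] unfolding e_def t_def
    by (intro sum_mono) simp
  also have "\<dots> = (\<Sum>k=1..n. t + multiplicity p k)"
    unfolding n_def using \<open>e > 0\<close> by (rule sum_over_multiples)
  also have "\<dots> = t * n + (\<Sum>k=1..n. multiplicity p k)"
    by (simp add: sum.distrib)
  finally have "p ^ (\<Sum>i=1..m. multiplicity p (s ^ i - 1))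
      \<le> p ^ (t * n + (\<Sum>k=1..n. multiplicity p k))"
    using prime_gt_0_nat[OF assms(1)] by (intro power_increasing) auto
  also have "\<dots> = (p ^ t) ^ n * p ^ (\<Sum>k=1..n. multiplicity p k)"
    by (simp only: power_add power_mult)
  also have "\<dots> \<le> (s ^ e) ^ n * 2 ^ n"
    using \<open>p ^ t \<le> s ^ e\<close> prime_power_sum_multiplicity_le[OF assms(1), of n]
    by (intro mult_mono power_mono) simp_all
  also have "\<dots> \<le> s ^ m * 2 ^ m"
  proof (rule mult_mono)
    have "e * n \<le> m"
      unfolding n_def by simp
    then show "(s ^ e) ^ n \<le> s ^ m"
      unfolding power_mult[symmetric] using assms(2) by (intro power_increasing) simp_all
    show "(2::nat) ^ n \<le> 2 ^ m"
      unfolding n_def by (intro power_increasing) simp_all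
  qed simp_all
  also have "\<dots> = (2 * s) ^ m"
    by (simp add: power_mult_distrib)
  finally show ?thesis .
qed

section \<open>Orders of the classical groups\<close>

lemma power_diff_dvd_power_double_diff:
  fixes x c :: "'a::comm_ring_1"
  shows "x ^ i - c dvd x ^ (2 * i) - c ^ 2"
proof -
  have "x ^ (2 * i) - c ^ 2 = (x ^ i + c) * (x ^ i - c)"
    by (simp add: power_mult mult.commute[of 2 i] power2_eq_square square_diff_square_factored)
  then show ?thesis
    by simp
qed

lemma nat_div_dvd:
  fixes N d :: int and Y :: nat
  assumes "0 \<le> N" "0 \<le> d" "d dvd N" "N dvd int Y"
  shows "nat (N div d) dvd Y"
proof -
  have "N div d dvd N"
    using assms(3) by (metis dvd_mult_div_cancel dvd_triv_right)
  moreover have "0 \<le> N div d"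
    using assms(1,2) by (simp add: div_int_pos_iff)
  ultimately have "int (nat (N div d)) dvd int Y"
    using assms(4) by (simp add: dvd_trans)
  then show ?thesis
    by (simp only: of_nat_dvd_iff)
qed

text \<open>The order of \<open>Sp\<^sub>2\<^sub>m(r)\<close> is \<open>r\<^sup>m\<^sup>2\<close> times this cofactor, and the
  orders of all the classical groups divide a power of \<open>r\<close> times it.\<close>
definition symplectic_cofactor :: "nat \<Rightarrow> nat \<Rightarrow> nat" where
  "symplectic_cofactor r m = (\<Prod>i\<in>{1..m}. r ^ (2 * i) - 1)"

lemma of_nat_symplectic_cofactor:
  assumes "r \<ge> 1"
  shows "int (symplectic_cofactor r m) = (\<Prod>i\<in>{1..m}. int r ^ (2 * i) - 1)"
  unfolding symplectic_cofactor_def of_nat_prod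
  using assms by (intro prod.cong) (auto simp: of_nat_diff)

lemma prod_dvd_symplectic_cofactor:
  fixes f :: "nat \<Rightarrow> int"
  assumes "r \<ge> 1" "k \<ge> 1" "\<And>i. k \<le> i \<Longrightarrow> i \<le> m \<Longrightarrow> f i dvd int r ^ (2 * i) - 1"
  shows "(\<Prod>i\<in>{k..m}. f i) dvd int (symplectic_cofactor r m)"
proof -
  have "(\<Prod>i\<in>{k..m}. f i) dvd (\<Prod>i\<in>{k..m}. int r ^ (2 * i) - 1)"
    using assms(3) by (intro prod_dvd_prod) auto
  also have "\<dots> dvd (\<Prod>i\<in>{1..m}. int r ^ (2 * i) - 1)"
    using assms(2) by (intro prod_dvd_prod_subset) auto
  finally show ?thesis
    using of_nat_symplectic_cofactor[OF assms(1)] by simp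
qed

lemma symplectic_cofactor_split_last:
  assumes "r \<ge> 1" "m \<ge> 1"
  shows "int (symplectic_cofactor r m) = (int r ^ (2 * m) - 1) * (\<Prod>i\<in>{1..m-1}. int r ^ (2 * i) - 1)"
proof -
  obtain k where "m = Suc k"
    using assms(2) by (cases m) auto
  then show ?thesis
    using of_nat_symplectic_cofactor[OF assms(1), of m] by (simp add: mult.commute)
qed

lemma symplectic_cofactor_pos:
  assumes "r \<ge> 2"
  shows "symplectic_cofactor r m > 0"
proof -
  have "r ^ (2 * i) > 1" if "i \<ge> 1" for i
    using assms that one_less_power[of r "2 * i"] by simp
  then show ?thesis
    unfolding symplectic_cofactor_def by (intro prod_pos) auto
qed

lemma multiplicity_symplectic_cofactor:
  assumes "prime p" "r \<ge> 2"
  shows "multiplicity p (symplectic_cofactor r m) = (\<Sum>i=1..m. multiplicity p ((r ^ 2) ^ i - 1))"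
proof -
  have "0 \<notin> (\<lambda>i. r ^ (2 * i) - 1) ` {1..m}"
    using symplectic_cofactor_pos[OF assms(2), of m] by (auto simp: symplectic_cofactor_def)
  then have "multiplicity p (symplectic_cofactor r m) = (\<Sum>i=1..m. multiplicity p (r ^ (2 * i) - 1))"
    unfolding symplectic_cofactor_def
    using assms(1) by (intro prime_elem_multiplicity_prod_distrib) (auto simp: prime_imp_prime_elem)
  then show ?thesis
    by (simp only: power_mult)
qed

lemma sign_power_cases:
  fixes c :: int
  assumes "c = 1 \<or> c = -1"
  shows "c ^ i = 1 \<or> c ^ i = -1"
  using assms by (cases "even i") auto

text \<open>Orders of \<open>L\<^sub>m(r)\<close> (\<open>c = 1\<close>) and \<open>U\<^sub>m(r)\<close> (\<open>c = -1\<close>).\<close>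
lemma linear_unitary_order_dvd:
  fixes c d :: int
  assumes "r \<ge> 1" "m \<ge> 2" "c = 1 \<or> c = -1" "0 \<le> d" "d dvd int r - c"
  shows "nat (int r ^ (m * (m - 1) div 2) * (\<Prod>i\<in>{2..m}. int r ^ i - c ^ i) div d)
    dvd r ^ (m * (m - 1) div 2) * symplectic_cofactor r m"
proof (rule nat_div_dvd)
  have "(c ^ i) ^ 2 = 1" for i
    using sign_power_cases[OF assms(3), of i] by auto
  then have "(\<Prod>i\<in>{2..m}. int r ^ i - c ^ i) dvd int (symplectic_cofactor r m)"
    using assms(1) power_diff_dvd_power_double_diff[of "int r" _ "c ^ _"] by (intro prod_dvd_symplectic_cofactor) auto
  then show "int r ^ (m * (m - 1) div 2) * (\<Prod>i\<in>{2..m}. int r ^ i - c ^ i)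
      dvd int (r ^ (m * (m - 1) div 2) * symplectic_cofactor r m)"
    by (simp add: mult_dvd_mono)
  have "d dvd int r - c"
    using assms(5) .
  also have "\<dots> dvd int r ^ 2 - c ^ 2"
    using power_diff_dvd_power_double_diff[of "int r" 1 c] by simp
  also have "\<dots> dvd int r ^ (m * (m - 1) div 2) * (\<Prod>i\<in>{2..m}. int r ^ i - c ^ i)"
    using assms(2) by (intro dvd_mult dvd_prodI) auto
  finally show "d dvd int r ^ (m * (m - 1) div 2) * (\<Prod>i\<in>{2..m}. int r ^ i - c ^ i)" .
  have "c ^ i \<le> int r ^ i" for i
  proof -
    have "1 \<le> int r ^ i"
      using assms(1) by simp
    then show ?thesis
      using sign_power_cases[OF assms(3), of i] by auto
  qed
  then show "0 \<le> int r ^ (m * (m - 1) div 2) * (\<Prod>i\<in>{2..m}. int r ^ i - c ^ i)"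
    by (intro mult_nonneg_nonneg prod_nonneg) auto
qed (use assms(4) in simp)

text \<open>Orders of \<open>PSp\<^sub>2\<^sub>m(r)\<close> and \<open>\<Omega>\<^sub>2\<^sub>m\<^sub>+\<^sub>1(r)\<close>, which differ only in the divisor \<open>d\<close>.\<close>
lemma symplectic_order_dvd:
  fixes d :: int
  assumes "r \<ge> 1" "m \<ge> 1" "0 \<le> d" "d dvd int r - 1"
  shows "nat (int r ^ (m * m) * (\<Prod>i\<in>{1..m}. int r ^ (2 * i) - 1) div d)
    dvd r ^ (m * m) * symplectic_cofactor r m"
proof (rule nat_div_dvd)
  show "int r ^ (m * m) * (\<Prod>i\<in>{1..m}. int r ^ (2 * i) - 1)
      dvd int (r ^ (m * m) * symplectic_cofactor r m)"
    using of_nat_symplectic_cofactor[OF assms(1)] by simp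
  have "d dvd int r - 1"
    using assms(4) .
  also have "\<dots> dvd int r ^ 2 - 1"
    using power_diff_dvd_power_double_diff[of "int r" 1 1] by simp
  also have "\<dots> dvd int r ^ (m * m) * (\<Prod>i\<in>{1..m}. int r ^ (2 * i) - 1)"
    using assms(2) by (intro dvd_mult dvd_prodI) auto
  finally show "d dvd int r ^ (m * m) * (\<Prod>i\<in>{1..m}. int r ^ (2 * i) - 1)" .
  show "0 \<le> int r ^ (m * m) * (\<Prod>i\<in>{1..m}. int r ^ (2 * i) - 1)"
    using assms(1) by (intro mult_nonneg_nonneg prod_nonneg) auto
qed (use assms(3) in simp)

text \<open>Orders of \<open>P\<Omega>\<^sup>+\<^sub>2\<^sub>m(r)\<close> (\<open>c = 1\<close>) and \<open>P\<Omega>\<^sup>-\<^sub>2\<^sub>m(r)\<close> (\<open>c = -1\<close>).\<close>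
lemma orthogonal_even_order_dvd:
  fixes c :: int
  assumes "r \<ge> 1" "m \<ge> 1" "c = 1 \<or> c = -1"
  shows "nat (int r ^ (m * (m - 1)) * (int r ^ m - c) * (\<Prod>i\<in>{1..m-1}. int r ^ (2 * i) - 1)
      div gcd 4 (int r ^ m - c))
    dvd r ^ (m * (m - 1)) * symplectic_cofactor r m"
proof (rule nat_div_dvd)
  have "int r ^ m - c dvd int r ^ (2 * m) - 1"
    using power_diff_dvd_power_double_diff[of "int r" m c] assms(3) by auto
  then show "int r ^ (m * (m - 1)) * (int r ^ m - c) * (\<Prod>i\<in>{1..m-1}. int r ^ (2 * i) - 1)
      dvd int (r ^ (m * (m - 1)) * symplectic_cofactor r m)"
    using symplectic_cofactor_split_last[OF assms(1,2)] by (simp add: mult_dvd_mono)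
  have "1 \<le> int r ^ m"
    using assms(1) by simp
  then have "c \<le> int r ^ m"
    using assms(3) by auto
  then show "0 \<le> int r ^ (m * (m - 1)) * (int r ^ m - c) * (\<Prod>i\<in>{1..m-1}. int r ^ (2 * i) - 1)"
    using assms(1) by (intro mult_nonneg_nonneg prod_nonneg) auto
qed (simp_all add: dvd_mult2)

lemma classical_order_dvd:
  assumes "r \<ge> 1" "simple_params F m r"
  shows "\<exists>a. classical_order F m r dvd r ^ a * symplectic_cofactor r m"
proof (cases F)
  case Lin
  have "int (gcd m (r - 1)) dvd int r - 1"
    using assms(1) by (metis gcd_dvd2 of_nat_dvd_iff of_nat_1 of_nat_diff)
  then show ?thesis
    using Lin assms linear_unitary_order_dvd[of r m 1]
    by (intro exI[of _ "m * (m - 1) div 2"]) simp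
next
  case Unit
  have "int (gcd m (r + 1)) dvd int r + 1"
    by (metis gcd_dvd2 of_nat_dvd_iff of_nat_1 of_nat_add)
  then show ?thesis
    using Unit assms linear_unitary_order_dvd[of r m "-1"]
    by (intro exI[of _ "m * (m - 1) div 2"]) simp
next
  case Symp
  have "int (gcd 2 (r - 1)) dvd int r - 1"
    using assms(1) by (metis gcd_dvd2 of_nat_dvd_iff of_nat_1 of_nat_diff)
  then show ?thesis
    using Symp assms symplectic_order_dvd[of r m]
    by (intro exI[of _ "m * m"]) simp
next
  case OrthOdd
  then have "2 dvd int r - 1"
    using assms(2) by simp
  then show ?thesis
    using OrthOdd assms symplectic_order_dvd[of r m 2]
    by (intro exI[of _ "m * m"]) simp
next
  case OrthPlus
  then show ?thesis
    using assms orthogonal_even_order_dvd[of r m 1]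
    by (intro exI[of _ "m * (m - 1)"]) simp
next
  case OrthMinus
  then show ?thesis
    using assms orthogonal_even_order_dvd[of r m "-1"]
    by (intro exI[of _ "m * (m - 1)"]) simp
qed

lemma multiplicity_le_of_dvd_power_mult:
  fixes p r a n c :: nat
  assumes "prime p" "\<not> p dvd r" "n dvd r ^ a * c" "c \<noteq> 0"
  shows "multiplicity p n \<le> multiplicity p c"
proof -
  have "r \<noteq> 0"
    using assms(2) by (metis dvd_0_right)
  have "\<not> p dvd r ^ a"
    using assms(1,2) prime_dvd_power by blast
  then have "multiplicity p (r ^ a) = 0"
    by (rule not_dvd_imp_multiplicity_0)
  have "multiplicity p n \<le> multiplicity p (r ^ a * c)"
    using \<open>r \<noteq> 0\<close> assms(3,4) by (intro dvd_imp_multiplicity_le) auto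
  also have "\<dots> = multiplicity p (r ^ a) + multiplicity p c"
    using assms(1,4) \<open>r \<noteq> 0\<close> by (simp add: prime_elem_multiplicity_mult_distrib prime_imp_prime_elem)
  finally show ?thesis
    using \<open>multiplicity p (r ^ a) = 0\<close> by simp
qed

lemma prime_power_multiplicity_classical_order_le:
  assumes "prime p" "\<not> p dvd r" "r \<ge> 2" "simple_params F m r"
  shows "p ^ multiplicity p (classical_order F m r) \<le> (2 * r ^ 2) ^ m"
proof -
  obtain a where "classical_order F m r dvd r ^ a * symplectic_cofactor r m"
    using classical_order_dvd[of r F m] assms(3,4) by auto
  moreover have "symplectic_cofactor r m \<noteq> 0"
    using symplectic_cofactor_pos[OF assms(3)] by simp
  ultimately have "multiplicity p (classical_order F m r) \<le> multiplicity p (symplectic_cofactor r m)"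
    by (rule multiplicity_le_of_dvd_power_mult[OF assms(1,2)])
  also have "\<dots> = (\<Sum>i=1..m. multiplicity p ((r ^ 2) ^ i - 1))"
    by (rule multiplicity_symplectic_cofactor[OF assms(1,3)])
  finally have "multiplicity p (classical_order F m r) \<le> (\<Sum>i=1..m. multiplicity p ((r ^ 2) ^ i - 1))" .
  then have "p ^ multiplicity p (classical_order F m r) \<le> p ^ (\<Sum>i=1..m. multiplicity p ((r ^ 2) ^ i - 1))"
    using prime_gt_0_nat[OF assms(1)] by (intro power_increasing) auto
  also have "\<dots> \<le> (2 * r ^ 2) ^ m"
  proof (rule prime_power_sum_multiplicity_power_diff_1_le[OF assms(1)])
    show "r ^ 2 > 1"
      using assms(3) one_less_power[of r 2] by simp
    show "coprime p (r ^ 2)"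
      using assms(1,2) by (simp add: prime_imp_coprime_nat)
    show "odd p \<or> [r ^ 2 = 1] (mod 4)"
    proof (cases "odd p")
      case False
      then have "p = 2"
        using primes_dvd_imp_eq[OF two_is_prime_nat assms(1)] by simp
      then have "odd r"
        using assms(2) by simp
      then show ?thesis
        using square_mod_8_eq_1_iff[of r] cong_dvd_modulus_nat[of "r ^ 2" 1 8 4] by simp
    qed simp
  qed
  finally show ?thesis .
qed

lemma le_log_ratio_of_power_le:
  fixes p v x k :: nat
  assumes "p > 1" "x > 0" "p ^ v \<le> x ^ k"
  shows "real v \<le> k * (ln (real x) / ln (real p))"
proof -
  have "real p ^ v \<le> real x ^ k"
    using assms(3) by (metis of_nat_le_iff of_nat_power)
  then have "ln (real p ^ v) \<le> ln (real x ^ k)"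
    using assms(1,2) by (subst ln_le_cancel_iff) auto
  then have "real v * ln (real p) \<le> k * ln (real x)"
    using assms(1,2) by (simp add: ln_realpow)
  moreover have "ln (real p) > 0"
    using assms(1) by simp
  ultimately show ?thesis
    by (simp add: pos_le_divide_eq)
qed

theorem lemma2p2:
  fixes F :: classical_family and m r p :: nat
  assumes "prime_power r" and "m \<ge> 1" and "simple_params F m r"
    and "prime p" and "\<not> p dvd r"
  shows "real (multiplicity p (classical_order F m r)) \<le> 3 * (ln (real ((r + 1) ^ m)) / ln (real p))"
proof -
  obtain q k where "prime q" "k \<ge> 1" "r = q ^ k"
    using assms(1) unfolding prime_power_def by blast
  then have "r \<ge> 2"
    using prime_ge_2_nat[of q] self_le_power[of q k] by simp
  have "p ^ multiplicity p (classical_order F m r) \<le> (2 * r ^ 2) ^ m"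
    using prime_power_multiplicity_classical_order_le[OF assms(4,5) \<open>r \<ge> 2\<close> assms(3)] .
  also have "\<dots> \<le> ((r + 1) ^ 3) ^ m"
  proof (rule power_mono)
    show "2 * r ^ 2 \<le> (r + 1) ^ 3"
      by (simp add: power2_eq_square power3_eq_cube algebra_simps)
  qed simp
  also have "\<dots> = ((r + 1) ^ m) ^ 3"
    by (simp only: power_mult[symmetric] mult.commute)
  finally have "p ^ multiplicity p (classical_order F m r) \<le> ((r + 1) ^ m) ^ 3" .
  then have "real (multiplicity p (classical_order F m r)) \<le> real 3 * (ln (real ((r + 1) ^ m)) / ln (real p))"
    using prime_gt_1_nat[OF assms(4)] by (rule le_log_ratio_of_power_le[rotated 2]) simp
  then show ?thesis
    by simp
qed

end
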